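(* Let $a,b,C\in\mathbb{R}$ with $b>1$, $C>0$, and let $(W_k)_{k\ge1}$ be real numbers with $|W_k|<\frac{C\log^a(2k+1)}{k^b}$ for all $k\in\mathbb{N}$. Then $$\lim_{n\to\infty}\sum_{k=1}^{n}|W_k|\left(\frac{2}{\pi}-\frac{n}{2^{4n-2}}\binom{2n}{n}\binom{2n-1}{n-k}\right)=0.$$ *)

theory Defs
  imports "HOL-Analysis.Analysis"
begin

end

theory Submission
  imports Defs "HOL-Real_Asymp.Real_Asymp"
begin

text \<open>
  Since \<open>binom(2n-1, n-1) = binom(2n, n) / 2\<close>, the coefficient at \<open>k = 1\<close> equals
  \<open>2n/(2n+1) \<cdot> binom(2n, n)\<^sup>2 (2n+1) / 16\<^sup>n\<close>, i.e. \<open>2n/(2n+1)\<close> divided by the \<open>n\<close>-th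
  partial Wallis product; hence it is at most 1 and tends to \<open>2/\<pi>\<close>. For fixed \<open>k\<close> the
  ratio \<open>binom(2n-1, n-k) / binom(2n-1, n-1)\<close> tends to 1, so every coefficient tends to
  \<open>2/\<pi>\<close>, and all of them lie in \<open>[0, 1]\<close> because the central binomial coefficient is
  maximal. The growth bound makes \<open>|W\<^sub>k|\<close> summable (as \<open>b > 1\<close>), and Tannery's theorem, i.e.
  dominated convergence for series, gives the limit 0.
\<close>

lemma summable_weighted_sum_tendsto_zero:
  fixes w :: "nat \<Rightarrow> real" and T :: "nat \<Rightarrow> nat \<Rightarrow> real"
  assumes "summable (\<lambda>k. \<bar>w k\<bar>)"
    and "\<And>k. (\<lambda>n. T n k) \<longlonglongrightarrow> 0"
    and "\<And>n k. 1 \<le> k \<Longrightarrow> k \<le> n \<Longrightarrow> \<bar>T n k\<bar> \<le> M"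
  shows "(\<lambda>n. \<Sum>k=1..n. w k * T n k) \<longlonglongrightarrow> 0"
proof -
  have "M \<ge> 0"
    using assms(3)[of 1 1] by linarith
  define A where "A k n = (if 1 \<le> k \<and> k \<le> n then w k * T n k else 0)" for k n
  have "(\<lambda>n. A k n) \<longlonglongrightarrow> 0" for k
  proof (cases "k = 0")
    case False
    show ?thesis
    proof (rule Lim_transform_eventually)
      show "(\<lambda>n. w k * T n k) \<longlonglongrightarrow> 0"
        using tendsto_mult_right_zero[OF assms(2)] .
      show "\<forall>\<^sub>F n in sequentially. w k * T n k = A k n"
        using eventually_ge_at_top[of k] by eventually_elim (use False in \<open>auto simp: A_def\<close>)
    qed
  qed (simp add: A_def)
  moreover have "\<forall>\<^sub>F (k, n) in at_top \<times>\<^sub>F sequentially. norm (A k n) \<le> \<bar>w k\<bar> * M"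
    using assms(3) \<open>M \<ge> 0\<close> by (intro always_eventually) (auto simp: A_def abs_mult intro: mult_left_mono)
  moreover have "summable (\<lambda>k. \<bar>w k\<bar> * M)"
    using assms(1) by (rule summable_mult2)
  ultimately have "(\<lambda>n. \<Sum>k. A k n) \<longlonglongrightarrow> (\<Sum>k. 0)"
    using tannerys_theorem[of A "\<lambda>_. 0" sequentially] by simp
  moreover have "(\<Sum>k. A k n) = (\<Sum>k=1..n. w k * T n k)" for n
  proof -
    have "(\<Sum>k. A k n) = (\<Sum>k\<in>{1..n}. A k n)"
      by (rule suminf_finite) (auto simp: A_def)
    then show ?thesis by (simp add: A_def)
  qed
  ultimately show ?thesis by simp
qed

lemma summable_ln_powr_div_powr:
  assumes "b > 1"
  shows "summable (\<lambda>k::nat. ln (2 * real k + 1) powr a / real k powr b)"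
proof (rule summable_comparison_test_bigo)
  show "summable (\<lambda>k::nat. norm (real k powr (-(1 + b) / 2)))"
    using summable_real_powr_iff[of "-(1 + b) / 2"] assms by simp
  show "(\<lambda>k. ln (2 * real k + 1) powr a / real k powr b) \<in> O(\<lambda>k. real k powr (-(1 + b) / 2))"
    using assms by (intro landau_o.small_imp_big) real_asymp
qed

lemma central_binomial_eq_double:
  "n \<ge> 1 \<Longrightarrow> (2 * n) choose n = 2 * ((2 * n - 1) choose (n - 1))"
  using times_binomial_minus1_eq[of n "2 * n"] by (simp add: mult_ac)

lemma binomial_mult_diff_eq: "(m choose i) * (m - i) = (m choose Suc i) * Suc i"
  by (metis binomial_absorb_comp binomial_absorption mult.commute)

lemma central_binomial_Suc:
  "real ((2 * Suc n) choose Suc n) * (real n + 1) = real ((2 * n) choose n) * (2 * (2 * real n + 1))"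
proof -
  have binomial_Suc: "real ((2 * Suc n) choose Suc n) = fact (Suc (Suc (2 * n))) / (fact (Suc n) * fact (Suc n))"
    using binomial_fact[of "Suc n" "2 * Suc n", where 'a = real] by (simp add: mult_2 del: binomial_Suc_Suc fact_Suc)
  have binomial: "real ((2 * n) choose n) = fact (2 * n) / (fact n * fact n)"
    using binomial_fact[of n "2 * n", where 'a = real] by (simp add: mult_2)
  have "fact n \<noteq> (0::real)" by simp
  then show ?thesis
    unfolding binomial_Suc binomial fact_Suc of_nat_Suc by (simp add: divide_simps) (simp add: algebra_simps)
qed

lemma wallis_partial_product_eq:
  "(\<Prod>k=1..n. (4*real k^2) / (4*real k^2 - 1)) = 16^n / (real ((2*n) choose n)^2 * (2*n+1))"
proof (induction n)
  case (Suc n)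
  define c where "c = real ((2*n) choose n)"
  have "c > 0"
    by (simp add: c_def)
  have c': "real ((2 * Suc n) choose Suc n) = c * (2 * (2 * real n + 1)) / (real n + 1)"
    using central_binomial_Suc[of n] by (simp add: c_def eq_divide_eq)
  have "(\<Prod>k=1..Suc n. (4*real k^2) / (4*real k^2 - 1))
      = (\<Prod>k=1..n. (4*real k^2) / (4*real k^2 - 1)) * ((4*real (Suc n)^2) / (4*real (Suc n)^2 - 1))"
    by (simp add: mult.commute)
  also have "\<dots> = 16^n / (c^2 * (2*real n+1)) * (4*(real n+1)^2 / ((2*real n+1)*(2*real n+3)))"
    unfolding Suc.IH c_def by (simp add: power2_eq_square algebra_simps)
  also have "\<dots> = 16^Suc n / (real ((2 * Suc n) choose Suc n)^2 * (2 * Suc n + 1))"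
    unfolding c' using \<open>c > 0\<close>
    by (simp add: divide_simps add_pos_nonneg) (simp add: algebra_simps power2_eq_square)
  finally show ?case .
qed simp

lemma wallis_partial_product_ge_1: "(\<Prod>k=1..n. (4*real k^2) / (4*real k^2 - 1)) \<ge> 1"
proof (rule prod_ge_1)
  fix k assume "k \<in> {1..n}"
  then have "1 \<le> real k ^ 2"
    by (simp add: one_le_power)
  then show "1 \<le> 4 * real k ^ 2 / (4 * real k ^ 2 - 1)"
    by (simp add: le_divide_eq)
qed

lemma binomial_ratio_tendsto:
  "(\<lambda>n. real ((2 * n - 1) choose (n - k)) / real ((2 * n - 1) choose (n - 1))) \<longlonglongrightarrow> 1"
proof (induction k)
  case 0
  show ?case
  proof (rule Lim_transform_eventually[OF tendsto_const])
    show "\<forall>\<^sub>F n in sequentially. 1 = real ((2 * n - 1) choose (n - 0)) / real ((2 * n - 1) choose (n - 1))"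
      using eventually_ge_at_top[of "1::nat"]
    proof eventually_elim
      case (elim n)
      then have "(2 * n - 1) choose n = (2 * n - 1) choose (n - 1)"
        using binomial_symmetric[of n "2 * n - 1"] by simp
      then show ?case
        using elim by simp
    qed
  qed
next
  case (Suc k)
  \<comment> \<open>Passing from \<open>n - k\<close> to \<open>n - Suc k\<close> multiplies the ratio by \<open>(n - k) / (n + k) \<longrightarrow> 1\<close>.\<close>
  have "(\<lambda>n. real ((2 * n - 1) choose (n - k)) / real ((2 * n - 1) choose (n - 1))
      * ((real n - real k) / (real n + real k))) \<longlonglongrightarrow> 1 * 1" (is "?f \<longlonglongrightarrow> _")
    by (intro tendsto_mult Suc.IH) real_asymp
  then have "?f \<longlonglongrightarrow> 1"
    by simp
  then show ?case
  proof (rule Lim_transform_eventually)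
    show "\<forall>\<^sub>F n in sequentially.
        real ((2 * n - 1) choose (n - k)) / real ((2 * n - 1) choose (n - 1))
          * ((real n - real k) / (real n + real k))
        = real ((2 * n - 1) choose (n - Suc k)) / real ((2 * n - 1) choose (n - 1))"
      using eventually_ge_at_top[of "Suc k"]
    proof eventually_elim
      case (elim n)
      have "((2 * n - 1) choose (n - Suc k)) * (n + k) = ((2 * n - 1) choose (n - k)) * (n - k)"
        using binomial_mult_diff_eq[of "2 * n - 1" "n - Suc k"] elim
        by (simp add: Suc_diff_Suc)
      then have "real ((2 * n - 1) choose (n - Suc k)) * (real n + real k)
          = real ((2 * n - 1) choose (n - k)) * (real n - real k)"
        using elim by (metis of_nat_add of_nat_diff of_nat_mult Suc_leD)
      moreover have "real n + real k > 0"
        using elim by simp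
      ultimately have "real ((2 * n - 1) choose (n - Suc k))
          = real ((2 * n - 1) choose (n - k)) * (real n - real k) / (real n + real k)"
        by (simp add: eq_divide_eq)
      then show ?case
        by simp
    qed
  qed
qed

definition wallis_coeff :: "nat \<Rightarrow> nat \<Rightarrow> real" where
  "wallis_coeff n k = real n / 2 ^ (4 * n - 2) * real ((2 * n) choose n) * real ((2 * n - 1) choose (n - k))"

lemma wallis_coeff_1_eq:
  "wallis_coeff n 1 = 2 * real n / (2 * real n + 1) / (\<Prod>k=1..n. (4*real k^2) / (4*real k^2 - 1))"
proof (cases "n = 0")
  case False
  then have binomial: "real ((2 * n - 1) choose (n - 1)) = real ((2 * n) choose n) / 2"
    using central_binomial_eq_double[of n] by simp
  have power: "(2::real) ^ (4 * n - 2) = 16 ^ n / 4"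
  proof -
    have "4 * n - 2 + 2 = 4 * n"
      using False by simp
    then have "(2::real) ^ (4 * n - 2) * 2 ^ 2 = 2 ^ (4 * n)"
      by (metis power_add)
    then show ?thesis
      by (simp add: power_mult eq_divide_eq)
  qed
  show ?thesis
    unfolding wallis_coeff_def wallis_partial_product_eq binomial power
    by (simp add: divide_simps add_pos_nonneg) (simp add: algebra_simps power2_eq_square)
qed (simp add: wallis_coeff_def)

lemma wallis_coeff_1_tendsto: "(\<lambda>n. wallis_coeff n 1) \<longlonglongrightarrow> 2 / pi"
proof -
  have "(\<lambda>n. 2 * real n / (2 * real n + 1) / (\<Prod>k=1..n. (4*real k^2) / (4*real k^2 - 1)))
      \<longlonglongrightarrow> 1 / (pi / 2)"
    by (intro tendsto_divide wallis) (real_asymp, simp)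
  then show ?thesis
    unfolding wallis_coeff_1_eq by simp
qed

lemma wallis_coeff_1_le_1: "wallis_coeff n 1 \<le> 1"
proof -
  have "2 * real n / (2 * real n + 1) \<le> 1"
    by simp
  also have "1 \<le> (\<Prod>k=1..n. (4*real k^2) / (4*real k^2 - 1))"
    by (rule wallis_partial_product_ge_1)
  finally have "2 * real n / (2 * real n + 1) \<le> (\<Prod>k=1..n. (4*real k^2) / (4*real k^2 - 1))" .
  moreover have "(\<Prod>k=1..n. (4*real k^2) / (4*real k^2 - 1)) > 0"
    using wallis_partial_product_ge_1[of n] by linarith
  ultimately show ?thesis
    unfolding wallis_coeff_1_eq by (simp only: divide_le_eq_1_pos)
qed

lemma wallis_coeff_le_wallis_coeff_1: "wallis_coeff n k \<le> wallis_coeff n 1"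
proof -
  have "(2 * n - 1) choose (n - k) \<le> (2 * n - 1) choose ((2 * n - 1) div 2)"
    by (rule binomial_maximum)
  also have "(2 * n - 1) div 2 = n - 1"
    by linarith
  finally show ?thesis
    unfolding wallis_coeff_def by (intro mult_left_mono) auto
qed

lemma wallis_coeff_tendsto: "(\<lambda>n. wallis_coeff n k) \<longlonglongrightarrow> 2 / pi"
proof -
  have "(\<lambda>n. wallis_coeff n 1 * (real ((2 * n - 1) choose (n - k)) / real ((2 * n - 1) choose (n - 1))))
      \<longlonglongrightarrow> 2 / pi * 1" (is "?f \<longlonglongrightarrow> _")
    by (intro tendsto_mult wallis_coeff_1_tendsto binomial_ratio_tendsto)
  then have "?f \<longlonglongrightarrow> 2 / pi"
    by simp
  then show ?thesis
  proof (rule Lim_transform_eventually)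
    show "\<forall>\<^sub>F n in sequentially. wallis_coeff n 1
        * (real ((2 * n - 1) choose (n - k)) / real ((2 * n - 1) choose (n - 1))) = wallis_coeff n k"
      using eventually_ge_at_top[of "1::nat"] by eventually_elim (simp add: wallis_coeff_def)
  qed
qed

lemma wallis_coeff_deviation_le_1: "\<bar>2 / pi - wallis_coeff n k\<bar> \<le> 1"
proof -
  have "0 \<le> wallis_coeff n k"
    by (simp add: wallis_coeff_def)
  moreover have "wallis_coeff n k \<le> 1"
    using wallis_coeff_le_wallis_coeff_1 wallis_coeff_1_le_1 by (rule order_trans)
  moreover have "0 \<le> 2 / pi" "2 / pi \<le> 1"
    using pi_gt3 by (auto simp: divide_le_eq)
  ultimately show ?thesis
    by linarith
qed

theorem lemma3p6:
  fixes a b C :: real and W :: "nat \<Rightarrow> real"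
  assumes "b > 1" and "C > 0"
    and "\<And>k. k \<ge> 1 \<Longrightarrow> \<bar>W k\<bar> < C * ln (2 * real k + 1) powr a / real k powr b"
  shows "(\<lambda>n. \<Sum>k=1..n. \<bar>W k\<bar> * (2 / pi - real n / 2 ^ (4 * n - 2)
            * real ((2 * n) choose n) * real ((2 * n - 1) choose (n - k))))
         \<longlonglongrightarrow> 0"
proof -
  have "summable (\<lambda>k. \<bar>W k\<bar>)"
  proof (rule summable_comparison_test_ev)
    show "summable (\<lambda>k. C * (ln (2 * real k + 1) powr a / real k powr b))"
      using summable_ln_powr_div_powr[OF assms(1)] by (rule summable_mult)
    show "\<forall>\<^sub>F k in sequentially. norm \<bar>W k\<bar> \<le> C * (ln (2 * real k + 1) powr a / real k powr b)"
      using eventually_ge_at_top[of "1::nat"] by eventually_elim (use assms(3) in fastforce)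
  qed
  moreover have "(\<lambda>n. 2 / pi - wallis_coeff n k) \<longlonglongrightarrow> 0" for k
    using tendsto_diff[OF tendsto_const wallis_coeff_tendsto, of "2 / pi" k] by simp
  ultimately have "(\<lambda>n. \<Sum>k=1..n. \<bar>W k\<bar> * (2 / pi - wallis_coeff n k)) \<longlonglongrightarrow> 0"
    using wallis_coeff_deviation_le_1 by (intro summable_weighted_sum_tendsto_zero) auto
  then show ?thesis
    by (simp add: wallis_coeff_def)
qed

end
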